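(* If $S=\{v_1,\ldots,v_n\}\subset\mathbb Z^n$ is an orthogonal subset with $p_4(S)=n$, then the lattice generated by $S$ is not cubiquitous.
   Context: $\mathbb Z^n$ carries the standard dot product with standard basis $e_1,\ldots,e_n$. $S$ is orthogonal if $\langle v_i,v_i\rangle\ge1$ for all $i$ and $\langle v_i,v_j\rangle=0$ for $i\ne j$. $E_j=\{i:\langle v_i,e_j\rangle\ne0\}$, $p_4(S)=|\{j:|E_j|=4\}|$. A full-rank sublattice $\Lambda\subset\mathbb Z^n$ is cubiquitous if $\Lambda\cap(x+\{0,1\}^n)\ne\emptyset$ for every $x\in\mathbb Z^n$. *)

theory Defs
  imports "HOL-Analysis.Analysis"
begin

text \<open>Vectors of Z^n are modelled as int ^ 'n, with 'n a finite index type, n = CARD('n).\<close>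

definition zdot :: "int ^ 'n \<Rightarrow> int ^ 'n \<Rightarrow> int" where
  "zdot x y = (\<Sum>j\<in>UNIV. x $ j * y $ j)"

definition zbasis :: "'n \<Rightarrow> int ^ 'n" where
  "zbasis j = (\<chi> k. if k = j then 1 else 0)"

definition orthogonal_family :: "('i \<Rightarrow> int ^ 'n) \<Rightarrow> bool" where
  "orthogonal_family v \<longleftrightarrow>
     (\<forall>i. zdot (v i) (v i) \<ge> 1) \<and> (\<forall>i k. i \<noteq> k \<longrightarrow> zdot (v i) (v k) = 0)"

definition Eset :: "('i \<Rightarrow> int ^ 'n) \<Rightarrow> 'n \<Rightarrow> 'i set" where
  "Eset v j = {i. zdot (v i) (zbasis j) \<noteq> 0}"

definition p4 :: "('i::finite \<Rightarrow> int ^ 'n) \<Rightarrow> nat" where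
  "p4 v = card {j. card (Eset v j) = 4}"

definition lattice_gen :: "('i::finite \<Rightarrow> int ^ 'n) \<Rightarrow> (int ^ 'n) set" where
  "lattice_gen v = {(\<Sum>i\<in>UNIV. c i *s v i) | c. True}"

definition to_real_vec :: "int ^ 'n \<Rightarrow> real ^ 'n" where
  "to_real_vec x = (\<chi> j. real_of_int (x $ j))"

definition full_rank_sublattice :: "(int ^ 'n) set \<Rightarrow> bool" where
  "full_rank_sublattice L \<longleftrightarrow>
     0 \<in> L \<and> (\<forall>x\<in>L. \<forall>y\<in>L. x + y \<in> L) \<and> (\<forall>x\<in>L. - x \<in> L) \<and>
     span (to_real_vec ` L) = UNIV"

definition cube01 :: "(int ^ 'n) set" where
  "cube01 = {y. \<forall>j. y $ j \<in> {0, 1}}"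

definition cubiquitous :: "(int ^ 'n) set \<Rightarrow> bool" where
  "cubiquitous L \<longleftrightarrow> full_rank_sublattice L \<and>
     (\<forall>x. L \<inter> ((\<lambda>y. x + y) ` cube01) \<noteq> {})"

end

theory Submission
  imports Defs
begin

text \<open>Write \<open>d i = zdot (v i) (v i)\<close>. Orthogonality makes \<open>zdot z (v i)\<close> a multiple
  of \<open>d i\<close> for every lattice point \<open>z\<close>.

  If some \<open>v i\<close> has no entry \<open>\<plusminus>1\<close>, then \<open>d i \<ge> 2 * (\<Sum>j. \<bar>v i $ j\<bar>)\<close>; since
  \<open>v i\<close> also has two nonzero entries, a suitable translate of the cube \<open>{0,1}^n\<close> keeps
  \<open>zdot _ (v i)\<close> strictly between \<open>0\<close> and \<open>d i\<close>, so it misses the lattice.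

  Otherwise every \<open>v i\<close> has an entry \<open>\<plusminus>1\<close>. If \<open>x + c\<close> is a lattice point with
  \<open>c\<close> in the cube, the sign vector \<open>2 * c - 1\<close> has squared length \<open>n\<close>, and its product
  with \<open>v i\<close> is congruent to \<open>- zdot (2 * x + 1) (v i)\<close> modulo \<open>2 * d i\<close>. Bessel's
  inequality therefore bounds \<open>\<Sum>i. r i x\<^sup>2 / d i\<close> by \<open>n\<close>, where
  \<open>r i x = sym_mod (d i) (zdot (2 * x + 1) (v i))\<close> is the residue of
  \<open>zdot (2 * x + 1) (v i)\<close> modulo \<open>2 * d i\<close> taken in \<open>[- d i, d i)\<close>.
  Averaged over a box of side \<open>\<Prod>i. d i\<close>, each \<open>r i\<close> is equidistributed thanks to the
  unit entry, and the mean of \<open>r i x\<^sup>2\<close> is \<open>(d i\<^sup>2 + 2) / 3\<close>; hence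
  \<open>\<Sum>i. d i \<le> 3 * n\<close>. But four nonzero entries in every column force
  \<open>\<Sum>i. d i \<ge> 4 * n\<close>.\<close>

lemma zdot_zbasis: "zdot x (zbasis j) = x $ j"
  unfolding zdot_def zbasis_def by (simp add: if_distrib cong: if_cong)

lemma zdot_add_left: "zdot (x + y) z = zdot x z + zdot y z"
  unfolding zdot_def by (simp add: distrib_right sum.distrib)

lemma zdot_diff_left: "zdot (x - y) z = zdot x z - zdot y z"
  unfolding zdot_def by (simp add: left_diff_distrib sum_subtractf)

lemma zdot_double_left: "zdot (2 * x) z = 2 * zdot x z"
  unfolding zdot_def by (simp add: sum_distrib_left mult.assoc)

lemma zdot_sum_left: "zdot (\<Sum>k\<in>A. c k *s u k) y = (\<Sum>k\<in>A. c k * zdot (u k) y)"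
  unfolding zdot_def
  by (simp add: sum_distrib_left sum_distrib_right mult.assoc sum.swap[of _ A])

lemma inner_to_real_vec: "inner (to_real_vec x) (to_real_vec y) = real_of_int (zdot x y)"
  unfolding inner_vec_def to_real_vec_def zdot_def by simp

lemma bessel_inequality:
  fixes u :: "'i \<Rightarrow> 'a::real_inner"
  assumes "finite I"
    and orth: "\<And>i k. i \<in> I \<Longrightarrow> k \<in> I \<Longrightarrow> i \<noteq> k \<Longrightarrow> inner (u i) (u k) = 0"
    and nonzero: "\<And>i. i \<in> I \<Longrightarrow> u i \<noteq> 0"
  shows "(\<Sum>i\<in>I. (inner x (u i))\<^sup>2 / inner (u i) (u i)) \<le> inner x x"
proof -
  define S where "S = (\<Sum>i\<in>I. (inner x (u i))\<^sup>2 / inner (u i) (u i))"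
  define p where "p = (\<Sum>i\<in>I. (inner x (u i) / inner (u i) (u i)) *\<^sub>R u i)"
  have up: "inner (u i) p = inner x (u i)" if "i \<in> I" for i
  proof -
    have "inner (u i) p = (\<Sum>k\<in>I. if k = i then inner x (u i) else 0)"
      unfolding p_def inner_sum_right using orth nonzero that by (intro sum.cong) auto
    then show ?thesis using assms(1) that by simp
  qed
  have px: "inner p x = S"
    unfolding p_def S_def inner_sum_left by (simp add: power2_eq_square inner_commute)
  have "inner p p = (\<Sum>i\<in>I. (inner x (u i) / inner (u i) (u i)) * inner (u i) p)"
    by (subst (1) p_def) (simp add: inner_sum_left)
  then have pp: "inner p p = S"
    unfolding S_def by (simp add: up power2_eq_square)
  have "0 \<le> inner (x - p) (x - p)" by simp
  also have "\<dots> = inner x x - S"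
    by (simp add: inner_diff_left inner_diff_right inner_commute[of x p] px pp)
  finally show ?thesis by (simp add: S_def)
qed

lemma orthogonal_family_zdot_self_pos:
  "orthogonal_family v \<Longrightarrow> 0 < zdot (v i) (v i)"
  unfolding orthogonal_family_def using zero_less_one order_less_le_trans by blast

lemma zdot_bessel_inequality:
  fixes v :: "'i::finite \<Rightarrow> int ^ 'n"
  assumes "orthogonal_family v"
  shows "(\<Sum>i\<in>UNIV. (real_of_int (zdot w (v i)))\<^sup>2 / real_of_int (zdot (v i) (v i)))
          \<le> real_of_int (zdot w w)"
proof -
  have "to_real_vec (v i) \<noteq> 0" for i
    using orthogonal_family_zdot_self_pos[OF assms, of i] inner_to_real_vec[of "v i" "v i"] by auto
  then show ?thesis
    using bessel_inequality[of UNIV "\<lambda>i. to_real_vec (v i)" "to_real_vec w"] assms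
    by (simp add: orthogonal_family_def inner_to_real_vec)
qed

lemma lattice_gen_zdot_dvd:
  assumes "orthogonal_family v" and "z \<in> lattice_gen v"
  shows "zdot (v i) (v i) dvd zdot z (v i)"
proof -
  obtain c where z: "z = (\<Sum>k\<in>UNIV. c k *s v k)"
    using assms(2) unfolding lattice_gen_def by blast
  have "zdot z (v i) = (\<Sum>k\<in>UNIV. if k = i then c i * zdot (v i) (v i) else 0)"
    unfolding z zdot_sum_left using assms(1) unfolding orthogonal_family_def
    by (intro sum.cong) auto
  then show ?thesis by simp
qed

lemma cubiquitous_cube_translate:
  assumes "cubiquitous L"
  obtains c where "c \<in> cube01" and "x + c \<in> L"
  using assms unfolding cubiquitous_def by blast

lemma p4_eq_CARD_column_card:
  fixes v :: "'i::finite \<Rightarrow> int ^ 'n::finite"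
  assumes "p4 v = CARD('n)"
  shows "card {i. v i $ j \<noteq> 0} = 4"
proof -
  have "{j. card (Eset v j) = 4} = UNIV"
    using assms by (intro card_eq_UNIV_imp_eq_UNIV) (auto simp: p4_def)
  then show ?thesis by (auto simp: Eset_def zdot_zbasis)
qed

lemma orthogonal_family_second_entry:
  fixes v :: "'i::finite \<Rightarrow> int ^ 'n::finite"
  assumes orth: "orthogonal_family v" and column: "card {k. v k $ j1 \<noteq> 0} \<ge> 2"
    and "v i $ j1 \<noteq> 0"
  obtains j2 where "j2 \<noteq> j1" and "v i $ j2 \<noteq> 0"
proof -
  have "\<not> {k. v k $ j1 \<noteq> 0} \<subseteq> {i}"
  proof
    assume "{k. v k $ j1 \<noteq> 0} \<subseteq> {i}"
    then have "card {k. v k $ j1 \<noteq> 0} \<le> 1"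
      using card_mono[of "{i}"] by simp
    with column show False by simp
  qed
  then obtain k where "k \<noteq> i" and "v k $ j1 \<noteq> 0" by blast
  have "zdot (v k) (v i) = 0"
    using orth \<open>k \<noteq> i\<close> unfolding orthogonal_family_def by blast
  moreover have "zdot (v k) (v i) = v k $ j1 * v i $ j1 + (\<Sum>j\<in>UNIV - {j1}. v k $ j * v i $ j)"
    unfolding zdot_def by (simp add: sum.remove)
  moreover have "v k $ j1 * v i $ j1 \<noteq> 0"
    using \<open>v k $ j1 \<noteq> 0\<close> \<open>v i $ j1 \<noteq> 0\<close> by simp
  ultimately have "(\<Sum>j\<in>UNIV - {j1}. v k $ j * v i $ j) \<noteq> 0"
    by (metis add.right_neutral)
  then obtain j where "j \<in> UNIV - {j1}" and "v k $ j * v i $ j \<noteq> 0"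
    by (rule sum.not_neutral_contains_not_neutral)
  then show thesis using that by simp
qed

lemma zdot_self_ge_twice_sum_abs:
  fixes w :: "int ^ 'n::finite"
  assumes "\<And>j. \<bar>w $ j\<bar> \<noteq> 1"
  shows "2 * (\<Sum>j\<in>UNIV. \<bar>w $ j\<bar>) \<le> zdot w w"
  unfolding zdot_def sum_distrib_left
proof (rule sum_mono)
  fix j
  show "2 * \<bar>w $ j\<bar> \<le> w $ j * w $ j"
  proof (cases "w $ j = 0")
    case False
    then have "2 \<le> \<bar>w $ j\<bar>" using assms[of j] by linarith
    then have "2 * \<bar>w $ j\<bar> \<le> \<bar>w $ j\<bar> * \<bar>w $ j\<bar>" by (intro mult_right_mono) auto
    then show ?thesis by simp
  qed simp
qed

lemma cube_translate_avoiding_multiples: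
  fixes w :: "int ^ 'n::finite"
  assumes no_unit: "\<And>j. \<bar>w $ j\<bar> \<noteq> 1"
    and "j1 \<noteq> j2" and "w $ j1 \<noteq> 0" and "w $ j2 \<noteq> 0"
  obtains x where "\<And>c. c \<in> cube01 \<Longrightarrow> 0 < zdot (x + c) w \<and> zdot (x + c) w < zdot w w"
proof -
  define l1 where "l1 = (\<Sum>j\<in>UNIV. \<bar>w $ j\<bar>)"
  define m where "m = \<bar>w $ j1\<bar>"
  have "m + \<bar>w $ j2\<bar> = (\<Sum>j\<in>{j1, j2}. \<bar>w $ j\<bar>)"
    using \<open>j1 \<noteq> j2\<close> by (simp add: m_def)
  also have "\<dots> \<le> l1" unfolding l1_def by (rule sum_mono2) auto
  finally have "m + 2 \<le> l1" using no_unit[of j2] \<open>w $ j2 \<noteq> 0\<close> by linarith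
  moreover have "m > 0" using \<open>w $ j1 \<noteq> 0\<close> by (simp add: m_def)
  moreover have "2 * l1 \<le> zdot w w"
    unfolding l1_def using no_unit by (rule zdot_self_ge_twice_sum_abs)
  ultimately have bound: "0 < s + m \<and> s + m < zdot w w" if "0 \<le> s" "s \<le> l1" for s
    using that by linarith
  define x :: "int ^ 'n" where
    "x = (\<chi> j. (if w $ j < 0 then -1 else 0) + (if j = j1 then sgn (w $ j1) else 0))"
  have "0 < zdot (x + c) w \<and> zdot (x + c) w < zdot w w" if "c \<in> cube01" for c
  proof -
    define T where "T j = ((if w $ j < 0 then -1 else 0) + c $ j) * w $ j" for j
    have T_bounds: "0 \<le> T j \<and> T j \<le> \<bar>w $ j\<bar>" for j
    proof -
      have "c $ j = 0 \<or> c $ j = 1" using \<open>c \<in> cube01\<close> unfolding cube01_def by blast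
      then show ?thesis unfolding T_def by (cases "w $ j < 0") auto
    qed
    have "(x + c) $ j * w $ j = T j + (if j = j1 then sgn (w $ j1) * w $ j1 else 0)" for j
      by (cases "j = j1") (simp_all add: x_def T_def ring_distribs)
    then have "zdot (x + c) w = (\<Sum>j\<in>UNIV. T j) + sgn (w $ j1) * w $ j1"
      unfolding zdot_def by (simp add: sum.distrib)
    also have "sgn (w $ j1) * w $ j1 = m"
      unfolding m_def by (simp add: abs_sgn mult.commute)
    finally have "zdot (x + c) w = (\<Sum>j\<in>UNIV. T j) + m" .
    moreover have "0 \<le> (\<Sum>j\<in>UNIV. T j)"
      using T_bounds by (simp add: sum_nonneg)
    moreover have "(\<Sum>j\<in>UNIV. T j) \<le> l1"
      unfolding l1_def using T_bounds by (intro sum_mono) blast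
    ultimately show ?thesis
      using bound[of "\<Sum>j\<in>UNIV. T j"] by simp
  qed
  then show thesis using that by blast
qed

lemma not_cubiquitous_if_no_unit_entry:
  fixes v :: "'i::finite \<Rightarrow> int ^ 'n::finite"
  assumes orth: "orthogonal_family v" and columns: "\<And>j. card {k. v k $ j \<noteq> 0} \<ge> 2"
    and no_unit: "\<And>j. \<bar>v i $ j\<bar> \<noteq> 1"
  shows "\<not> cubiquitous (lattice_gen v)"
proof
  assume cub: "cubiquitous (lattice_gen v)"
  obtain j1 where "v i $ j1 \<noteq> 0"
  proof (rule ccontr)
    assume "\<not> thesis"
    then have "\<forall>j. v i $ j = 0" using that by blast
    then have "zdot (v i) (v i) = 0" by (simp add: zdot_def)
    with orthogonal_family_zdot_self_pos[OF orth, of i] show False by simp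
  qed
  moreover obtain j2 where "j2 \<noteq> j1" and "v i $ j2 \<noteq> 0"
    using orthogonal_family_second_entry[OF orth columns \<open>v i $ j1 \<noteq> 0\<close>] by blast
  ultimately obtain x where x: "\<And>c. c \<in> cube01 \<Longrightarrow>
      0 < zdot (x + c) (v i) \<and> zdot (x + c) (v i) < zdot (v i) (v i)"
    using cube_translate_avoiding_multiples[OF no_unit, of j1 j2] by blast
  obtain c where "c \<in> cube01" and "x + c \<in> lattice_gen v"
    using cub by (rule cubiquitous_cube_translate)
  then show False
    using x lattice_gen_zdot_dvd[OF orth] zdvd_not_zless by blast
qed

definition sym_mod :: "int \<Rightarrow> int \<Rightarrow> int" where
  "sym_mod D a = (a + D) mod (2 * D) - D"

lemma abs_sym_mod_le:
  assumes "D > 0"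
  shows "\<bar>sym_mod D a\<bar> \<le> \<bar>a + 2 * D * t\<bar>"
proof -
  define r where "r = (a + D) mod (2 * D)"
  define s where "s = (a + D) div (2 * D) + t"
  have r: "0 \<le> r" "r < 2 * D" using assms by (simp_all add: r_def)
  have "a + 2 * D * t = (r - D) + 2 * D * s"
    unfolding r_def s_def by (simp add: algebra_simps minus_mod_eq_mult_div [symmetric])
  moreover have "\<bar>r - D\<bar> \<le> \<bar>(r - D) + 2 * D * s\<bar>"
  proof (cases "s = 0")
    case False
    then have "2 * D \<le> \<bar>2 * D * s\<bar>"
      using assms by (simp add: abs_mult)
    then show ?thesis using r by linarith
  qed simp
  ultimately show ?thesis by (simp add: sym_mod_def r_def)
qed

lemma sym_mod_even:
  assumes "even (b + D)"
  shows "sym_mod D (2 * u + b) = 2 * ((u + (b + D) div 2) mod D) - D"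
proof -
  have "2 * u + b + D = 2 * (u + (b + D) div 2)" using assms by simp
  then show ?thesis by (simp add: sym_mod_def add.assoc mult_mod_right)
qed

definition zbox :: "int \<Rightarrow> (int ^ 'n) set" where
  "zbox N = {x. \<forall>j. x $ j \<in> {0..<N}}"

lemma finite_zbox: "finite (zbox N :: (int ^ 'n::finite) set)"
proof -
  have "finite (vec_nth -` (UNIV \<rightarrow>\<^sub>E {0..<N}) :: (int ^ 'n) set)"
    by (rule finite_vimageI) (auto intro: finite_PiE injI simp: vec_eq_iff)
  moreover have "(zbox N :: (int ^ 'n) set) = vec_nth -` (UNIV \<rightarrow>\<^sub>E {0..<N})"
    by (auto simp: zbox_def PiE_iff)
  ultimately show ?thesis by simp
qed

lemma zero_in_zbox: "N > 0 \<Longrightarrow> 0 \<in> zbox N"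
  by (simp add: zbox_def)

lemma sum_lessThan_mod_shift:
  fixes G :: "int \<Rightarrow> 'a::comm_monoid_add"
  assumes "n > 0"
  shows "(\<Sum>k<n. G ((u + int k) mod int n)) = (\<Sum>k<n. G (int k))"
proof (rule sum.reindex_bij_witness[of _ "\<lambda>k. nat ((int k - u) mod int n)"
      "\<lambda>k. nat ((u + int k) mod int n)"])
  fix a assume "a \<in> {..<n}"
  then show "nat ((int (nat ((u + int a) mod int n)) - u) mod int n) = a"
    using assms by (simp add: mod_diff_left_eq)
  show "nat ((u + int a) mod int n) \<in> {..<n}" using assms by (simp add: nat_less_iff)
  show "G (int (nat ((u + int a) mod int n))) = G ((u + int a) mod int n)" using assms by simp
next
  fix b assume "b \<in> {..<n}"
  then show "nat ((u + int (nat ((int b - u) mod int n))) mod int n) = b"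
    using assms by (simp add: mod_add_right_eq)
  show "nat ((int b - u) mod int n) \<in> {..<n}" using assms by (simp add: nat_less_iff)
qed

lemma zbox_shift_permutation:
  fixes w :: "int ^ 'n::finite"
  assumes unit: "\<bar>w $ j0\<bar> = 1" and "int d dvd N" and "N > 0"
  obtains T where "bij_betw T (zbox N) (zbox N)"
    and "\<And>x c. (zdot (T x) w + c) mod int d = (zdot x w + 1 + c) mod int d"
proof -
  define \<epsilon> where "\<epsilon> = w $ j0"
  have \<epsilon>: "\<epsilon> * \<epsilon> = 1" using unit by (metis \<epsilon>_def abs_mult_self_eq mult_1)
  define T :: "int \<Rightarrow> int ^ 'n \<Rightarrow> int ^ 'n" where
    "T e x = (\<chi> j. if j = j0 then (x $ j0 + e) mod N else x $ j)" for e x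
  have T_inverse: "T (- e) (T e x) = x" if "x \<in> zbox N" for e x
    using that by (simp add: T_def zbox_def vec_eq_iff mod_diff_left_eq)
  have T_zbox: "T e x \<in> zbox N" if "x \<in> zbox N" for e x
    using that \<open>N > 0\<close> by (simp add: T_def zbox_def)
  obtain r where r: "N = int d * r" using \<open>int d dvd N\<close> by (elim dvdE)
  have "bij_betw (T \<epsilon>) (zbox N) (zbox N)"
    by (rule bij_betw_byWitness[where f' = "T (- \<epsilon>)"])
      (use T_inverse[of _ "- \<epsilon>"] T_inverse T_zbox in auto)
  moreover have "(zdot (T \<epsilon> x) w + c) mod int d = (zdot x w + 1 + c) mod int d" for x c
  proof -
    define q where "q = (x $ j0 + \<epsilon>) div N"
    have "T \<epsilon> x $ j * w $ j = x $ j * w $ j + (if j = j0 then (\<epsilon> - N * q) * \<epsilon> else 0)" for j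
      by (cases "j = j0")
        (simp_all add: T_def q_def \<epsilon>_def algebra_simps minus_div_mult_eq_mod [symmetric])
    then have "zdot (T \<epsilon> x) w = zdot x w + (\<epsilon> - N * q) * \<epsilon>"
      unfolding zdot_def by (simp add: sum.distrib)
    then have "zdot (T \<epsilon> x) w + c = (zdot x w + 1 + c) + int d * (- (r * q * \<epsilon>))"
      using \<epsilon> by (simp add: r algebra_simps)
    then show ?thesis by (simp only: mod_mult_self2)
  qed
  ultimately show thesis by (rule that)
qed

lemma sum_zbox_residue_uniform:
  fixes w :: "int ^ 'n::finite" and G :: "int \<Rightarrow> 'a::comm_semiring_1"
  assumes unit: "\<bar>w $ j0\<bar> = 1" and "d > 0" and "int d dvd N" and "N > 0"
  shows "of_nat d * (\<Sum>x\<in>zbox N. G ((zdot x w + u) mod int d))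
       = of_nat (card (zbox N :: (int ^ 'n) set)) * (\<Sum>k<d. G (int k))"
proof -
  obtain T where T_bij: "bij_betw T (zbox N) (zbox N)"
    and T_dot: "\<And>x c. (zdot (T x) w + c) mod int d = (zdot x w + 1 + c) mod int d"
    using zbox_shift_permutation[OF assms(1,3,4)] by blast
  define S where "S k = (\<Sum>x\<in>zbox N. G ((zdot x w + u + int k) mod int d))" for k
  have "S (Suc k) = S k" for k
  proof -
    have "S k = (\<Sum>x\<in>zbox N. G ((zdot x w + (u + int k)) mod int d))"
      by (simp add: S_def add.assoc)
    also have "\<dots> = (\<Sum>x\<in>zbox N. G ((zdot (T x) w + (u + int k)) mod int d))"
      by (rule sum.reindex_bij_betw [OF T_bij, symmetric])
    also have "\<dots> = S (Suc k)"
      unfolding S_def T_dot by (simp add: algebra_simps)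
    finally show ?thesis by simp
  qed
  then have S_const: "S k = S 0" for k by (induction k) simp_all
  have "of_nat d * S 0 = (\<Sum>k<d. S 0)" by simp
  also have "\<dots> = (\<Sum>k<d. S k)" by (intro sum.cong refl S_const [symmetric])
  also have "\<dots> = (\<Sum>x\<in>zbox N. \<Sum>k<d. G ((zdot x w + u + int k) mod int d))"
    unfolding S_def by (rule sum.swap)
  also have "\<dots> = of_nat (card (zbox N :: (int ^ 'n) set)) * (\<Sum>k<d. G (int k))"
    using sum_lessThan_mod_shift[OF \<open>d > 0\<close>, of G] by simp
  finally show ?thesis by (simp add: S_def)
qed

lemma sum_lessThan_square_affine:
  "3 * (\<Sum>k<n. (2 * int k - c)\<^sup>2)
     = 2 * (int n - 1) * int n * (2 * int n - 1) - 6 * c * int n * (int n - 1) + 3 * int n * c\<^sup>2"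
  by (induction n) (simp_all add: algebra_simps power2_eq_square)

lemma sum_lessThan_centred_square: "3 * (\<Sum>k<n. (2 * int k - int n)\<^sup>2) = int n ^ 3 + 2 * int n"
  by (subst sum_lessThan_square_affine) (simp add: algebra_simps power2_eq_square power3_eq_cube)

lemma zdot_double_plus_one: "zdot (2 * x + 1) w = 2 * zdot x w + zdot 1 w"
  by (simp add: zdot_add_left zdot_double_left)

lemma even_zdot_one_plus_zdot_self: "even (zdot 1 w + zdot w w)"
proof -
  have "zdot 1 w + zdot w w = (\<Sum>j\<in>UNIV. w $ j * (w $ j + 1))"
    unfolding zdot_def by (simp add: sum.distrib [symmetric] algebra_simps)
  then show ?thesis by (simp add: dvd_sum)
qed

lemma sum_zbox_sym_mod_square:
  fixes w :: "int ^ 'n::finite"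
  assumes unit: "\<bar>w $ j0\<bar> = 1" and "D > 0" and "D dvd N" and "N > 0"
    and parity: "even (zdot 1 w + D)"
  shows "3 * (\<Sum>x\<in>zbox N. (sym_mod D (zdot (2 * x + 1) w))\<^sup>2)
       = int (card (zbox N :: (int ^ 'n) set)) * (D\<^sup>2 + 2)"
proof -
  define d where "d = nat D"
  have D: "D = int d" "d > 0" using \<open>D > 0\<close> by (simp_all add: d_def)
  define M where "M = (zdot 1 w + D) div 2"
  have "sym_mod D (zdot (2 * x + 1) w) = 2 * ((zdot x w + M) mod D) - D" for x
    unfolding zdot_double_plus_one M_def using parity by (rule sym_mod_even)
  then have "D * (3 * (\<Sum>x\<in>zbox N. (sym_mod D (zdot (2 * x + 1) w))\<^sup>2))
      = 3 * (int d * (\<Sum>x\<in>zbox N. (\<lambda>k. (2 * k - D)\<^sup>2) ((zdot x w + M) mod int d)))"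
    by (simp add: D)
  also have "\<dots> = int (card (zbox N :: (int ^ 'n) set)) * (3 * (\<Sum>k<d. (2 * int k - int d)\<^sup>2))"
    using sum_zbox_residue_uniform[OF unit \<open>d > 0\<close>, of N "\<lambda>k. (2 * k - D)\<^sup>2" M]
      \<open>D dvd N\<close> \<open>N > 0\<close> by (simp add: D)
  also have "\<dots> = D * (int (card (zbox N :: (int ^ 'n) set)) * (D\<^sup>2 + 2))"
    unfolding sum_lessThan_centred_square D by (simp add: algebra_simps power2_eq_square power3_eq_cube)
  finally show ?thesis using \<open>D > 0\<close> by simp
qed

lemma sum_zbox_sym_mod_square_ge:
  fixes w :: "int ^ 'n::finite"
  assumes "\<bar>w $ j0\<bar> = 1" and "0 < zdot w w" and "zdot w w dvd N" and "N > 0"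
  shows "real (card (zbox N :: (int ^ 'n) set)) * real_of_int (zdot w w) / 3
    \<le> (\<Sum>x\<in>zbox N. (real_of_int (sym_mod (zdot w w) (zdot (2 * x + 1) w)))\<^sup>2)
        / real_of_int (zdot w w)"
proof -
  define C where "C = real (card (zbox N :: (int ^ 'n) set))"
  define D where "D = real_of_int (zdot w w)"
  have "3 * (\<Sum>x\<in>zbox N. (sym_mod (zdot w w) (zdot (2 * x + 1) w))\<^sup>2)
      = int (card (zbox N :: (int ^ 'n) set)) * ((zdot w w)\<^sup>2 + 2)"
    using assms even_zdot_one_plus_zdot_self by (intro sum_zbox_sym_mod_square)
  then have "real_of_int (3 * (\<Sum>x\<in>zbox N. (sym_mod (zdot w w) (zdot (2 * x + 1) w))\<^sup>2))
      = real_of_int (int (card (zbox N :: (int ^ 'n) set)) * ((zdot w w)\<^sup>2 + 2))"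
    by (rule arg_cong)
  then have "3 * (\<Sum>x\<in>zbox N. (real_of_int (sym_mod (zdot w w) (zdot (2 * x + 1) w)))\<^sup>2)
      = C * (D\<^sup>2 + 2)"
    by (simp add: C_def D_def)
  then have "C * D / 3 * D \<le> (\<Sum>x\<in>zbox N. (real_of_int (sym_mod (zdot w w) (zdot (2 * x + 1) w)))\<^sup>2)"
    by (simp add: C_def power2_eq_square algebra_simps)
  then show ?thesis using \<open>0 < zdot w w\<close> by (simp add: C_def D_def pos_le_divide_eq)
qed

lemma sum_sym_mod_square_le_if_cube_translate_in_lattice:
  fixes v :: "'i::finite \<Rightarrow> int ^ 'n::finite"
  assumes orth: "orthogonal_family v" and "c \<in> cube01" and "x + c \<in> lattice_gen v"
  shows "(\<Sum>i\<in>UNIV. (real_of_int (sym_mod (zdot (v i) (v i)) (zdot (2 * x + 1) (v i))))\<^sup>2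
           / real_of_int (zdot (v i) (v i))) \<le> real CARD('n)"
proof -
  define y where "y = 2 * (x + c) - (2 * x + 1)"
  have "y $ j * y $ j = 1" for j
  proof -
    have "c $ j = 0 \<or> c $ j = 1" using \<open>c \<in> cube01\<close> unfolding cube01_def by blast
    then show ?thesis by (auto simp: y_def)
  qed
  then have y_norm: "zdot y y = int CARD('n)" by (simp add: zdot_def)
  have sq_le: "(real_of_int (sym_mod (zdot (v i) (v i)) (zdot (2 * x + 1) (v i))))\<^sup>2
      \<le> (real_of_int (zdot y (v i)))\<^sup>2" for i
  proof -
    have pos: "zdot (v i) (v i) > 0" using orth by (rule orthogonal_family_zdot_self_pos)
    obtain t where t: "zdot (x + c) (v i) = zdot (v i) (v i) * t"
      using lattice_gen_zdot_dvd[OF orth \<open>x + c \<in> lattice_gen v\<close>, of i] by (elim dvdE)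
    have "zdot y (v i) = 2 * zdot (x + c) (v i) - zdot (2 * x + 1) (v i)"
      unfolding y_def by (simp only: zdot_diff_left zdot_double_left)
    then have "\<bar>zdot y (v i)\<bar> = \<bar>zdot (2 * x + 1) (v i) + 2 * zdot (v i) (v i) * (- t)\<bar>"
      unfolding t by simp
    then have "\<bar>sym_mod (zdot (v i) (v i)) (zdot (2 * x + 1) (v i))\<bar> \<le> \<bar>zdot y (v i)\<bar>"
      using abs_sym_mod_le[OF pos] by presburger
    then show ?thesis
      by (simp only: abs_le_square_iff of_int_le_iff flip: of_int_power)
  qed
  have "(\<Sum>i\<in>UNIV. (real_of_int (sym_mod (zdot (v i) (v i)) (zdot (2 * x + 1) (v i))))\<^sup>2
           / real_of_int (zdot (v i) (v i)))
      \<le> (\<Sum>i\<in>UNIV. (real_of_int (zdot y (v i)))\<^sup>2 / real_of_int (zdot (v i) (v i)))"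
    using orthogonal_family_zdot_self_pos[OF orth]
    by (intro sum_mono divide_right_mono sq_le) (simp add: less_imp_le)
  also have "\<dots> \<le> real_of_int (zdot y y)"
    by (rule zdot_bessel_inequality[OF orth])
  finally show ?thesis by (simp add: y_norm)
qed

lemma sum_column_card_le_sum_zdot_self:
  fixes v :: "'i::finite \<Rightarrow> int ^ 'n::finite"
  shows "int (\<Sum>j\<in>UNIV. card {i. v i $ j \<noteq> 0}) \<le> (\<Sum>i\<in>UNIV. zdot (v i) (v i))"
proof -
  have "int (card {i. v i $ j \<noteq> 0}) \<le> (\<Sum>i\<in>UNIV. v i $ j * v i $ j)" for j
  proof -
    have "int (card {i. v i $ j \<noteq> 0}) = (\<Sum>i\<in>UNIV. if v i $ j \<noteq> 0 then 1 else 0)"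
      by (simp add: sum.If_cases)
    also have "\<dots> \<le> (\<Sum>i\<in>UNIV. v i $ j * v i $ j)"
    proof (rule sum_mono)
      fix i
      have "v i $ j \<noteq> 0 \<Longrightarrow> 0 < (v i $ j)\<^sup>2" by simp
      then have "v i $ j \<noteq> 0 \<Longrightarrow> 1 \<le> v i $ j * v i $ j"
        unfolding power2_eq_square by linarith
      then show "(if v i $ j \<noteq> 0 then 1 else 0) \<le> v i $ j * v i $ j" by simp
    qed
    finally show ?thesis .
  qed
  then have "int (\<Sum>j\<in>UNIV. card {i. v i $ j \<noteq> 0}) \<le> (\<Sum>j\<in>UNIV. \<Sum>i\<in>UNIV. v i $ j * v i $ j)"
    unfolding of_nat_sum by (rule sum_mono)
  also have "\<dots> = (\<Sum>i\<in>UNIV. zdot (v i) (v i))"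
    unfolding zdot_def by (rule sum.swap)
  finally show ?thesis .
qed

lemma not_cubiquitous_if_unit_entries:
  fixes v :: "'i::finite \<Rightarrow> int ^ 'n::finite"
  assumes orth: "orthogonal_family v"
    and unit: "\<And>i. \<exists>j. \<bar>v i $ j\<bar> = 1"
    and large: "3 * int CARD('n) < (\<Sum>i\<in>UNIV. zdot (v i) (v i))"
  shows "\<not> cubiquitous (lattice_gen v)"
proof
  assume cub: "cubiquitous (lattice_gen v)"
  define d where "d i = zdot (v i) (v i)" for i
  have d_pos: "d i > 0" for i
    unfolding d_def using orth by (rule orthogonal_family_zdot_self_pos)
  define N where "N = (\<Prod>i\<in>UNIV. d i)"
  have "N > 0" unfolding N_def using d_pos by (simp add: prod_pos)
  define B where "B = (zbox N :: (int ^ 'n) set)"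
  define C where "C = real (card B)"
  have "C > 0"
    using finite_zbox zero_in_zbox[OF \<open>N > 0\<close>] by (auto simp: C_def B_def card_gt_0_iff)
  define r where "r i x = real_of_int (sym_mod (d i) (zdot (2 * x + 1) (v i)))" for i x
  have lower: "C * real_of_int (d i) / 3 \<le> (\<Sum>x\<in>B. (r i x)\<^sup>2) / real_of_int (d i)" for i
  proof -
    obtain j0 where "\<bar>v i $ j0\<bar> = 1" using unit by blast
    moreover have "d i dvd N" unfolding N_def by (rule dvd_prodI) simp_all
    ultimately show ?thesis
      using sum_zbox_sym_mod_square_ge d_pos \<open>N > 0\<close> unfolding C_def B_def r_def d_def
      by blast
  qed
  have "C * real_of_int (\<Sum>i\<in>UNIV. d i) / 3 = (\<Sum>i\<in>UNIV. C * real_of_int (d i) / 3)"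
    by (simp add: sum_distrib_left sum_divide_distrib)
  also have "\<dots> \<le> (\<Sum>i\<in>UNIV. (\<Sum>x\<in>B. (r i x)\<^sup>2) / real_of_int (d i))"
    by (rule sum_mono) (rule lower)
  also have "\<dots> = (\<Sum>x\<in>B. \<Sum>i\<in>UNIV. (r i x)\<^sup>2 / real_of_int (d i))"
    by (simp add: sum_divide_distrib sum.swap [of _ B])
  also have "\<dots> \<le> (\<Sum>x\<in>B. real CARD('n))"
  proof (rule sum_mono)
    fix x
    obtain c where "c \<in> cube01" and "x + c \<in> lattice_gen v"
      using cub by (rule cubiquitous_cube_translate)
    then show "(\<Sum>i\<in>UNIV. (r i x)\<^sup>2 / real_of_int (d i)) \<le> real CARD('n)"
      unfolding r_def d_def by (rule sum_sym_mod_square_le_if_cube_translate_in_lattice[OF orth])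
  qed
  also have "\<dots> = C * real CARD('n)" by (simp add: C_def)
  finally have "real_of_int (\<Sum>i\<in>UNIV. d i) \<le> real_of_int (3 * int CARD('n))"
    using \<open>C > 0\<close> by (simp add: field_simps)
  then have "(\<Sum>i\<in>UNIV. d i) \<le> 3 * int CARD('n)"
    by (simp only: of_int_le_iff)
  with large show False by (simp add: d_def)
qed

theorem theorem3p4:
  fixes v :: "'n::finite \<Rightarrow> int ^ 'n"
  assumes "orthogonal_family v"
    and "p4 v = CARD('n)"
  shows "\<not> cubiquitous (lattice_gen v)"
proof -
  have column: "card {i. v i $ j \<noteq> 0} = 4" for j
    using assms(2) by (rule p4_eq_CARD_column_card)
  show ?thesis
  proof (cases "\<exists>i. \<forall>j. \<bar>v i $ j\<bar> \<noteq> 1")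
    case True
    then obtain i where "\<And>j. \<bar>v i $ j\<bar> \<noteq> 1" by blast
    moreover have "card {i. v i $ j \<noteq> 0} \<ge> 2" for j using column by simp
    ultimately show ?thesis
      using not_cubiquitous_if_no_unit_entry[OF assms(1)] by blast
  next
    case False
    then have "\<exists>j. \<bar>v i $ j\<bar> = 1" for i by blast
    moreover have "3 * int CARD('n) < (\<Sum>i\<in>UNIV. zdot (v i) (v i))"
    proof -
      have "4 * int CARD('n) \<le> (\<Sum>i\<in>UNIV. zdot (v i) (v i))"
        using sum_column_card_le_sum_zdot_self[of v] column by simp
      moreover have "CARD('n) > 0" by (rule finite_UNIV_card_ge_0) simp
      ultimately show ?thesis by linarith
    qed
    ultimately show ?thesis
      by (rule not_cubiquitous_if_unit_entries[OF assms(1)])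
  qed
qed

end
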